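(* Consider the relative value iteration described in the context. The function $V(z)$ associated with a belief-state $z=(\beta,r,\Delta,\tilde b)$ does not depend on the partial battery knowledge $\tilde b$; that is, $V(\beta,r,\Delta,\tilde b)=V(\beta,r,\Delta,\bar b)$ for all $\beta,r,\Delta$ and all $\tilde b,\bar b\in\{1,\dots,B\}$.
   Context: Parameters: battery capacity $B\ge1$, energy harvesting rate $\lambda\in[0,1]$, request probability $p\in[0,1]$, maximal age $\Delta^{\max}\ge2$. Belief-states are $z=(\beta,r,\Delta,\tilde b)$ with $\beta\in[0,1]^{B+1}$ a probability vector (entries indexed $0,\dots,B$), $r\in\{0,1\}$, $\Delta\in\{1,\dots,\Delta^{\max}\}$, $\tilde b\in\{1,\dots,B\}$; $\mathcal Z$ is the set of belief-states. Let $\boldsymbol\Lambda$ be the $(B+1)\times(B+1)$ matrix (indices $0,\dots,B$) with $\Lambda_{j,j}=1-\lambda$, $\Lambda_{j+1,j}=\lambda$ for $j<B$, $\Lambda_{B,B}=1$, zeros elsewhere; $\rho^0=\rho^1=(1-\lambda,\lambda,0,\dots,0)^{\mathrm T}$, and for $j=1,\dots,B$, $\rho^j$ has $1-\lambda$ at index $j-1$, $\lambda$ at index $j$, zeros elsewhere. Write $\Delta^+=\min\{\Delta+1,\Delta^{\max}\}$ and $q(r')=r'p+(1-r')(1-p)$. Relative value iteration: fix a reference $z_{\mathrm{ref}}\in\mathcal Z$, set $V^{(0)}\equiv0$, $h^{(0)}\equiv0$, and for $i\ge1$ define $Q^{(i)}(z,0)=r\Delta^+ +\sum_{r'=0}^1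 q(r')\,h^{(i-1)}(\boldsymbol\Lambda\beta,r',\Delta^+,\tilde b)$, $Q^{(i)}(z,1)=r[\beta_0\Delta^+ +(1-\beta_0)]+\beta_0\sum_{r'=0}^1q(r')\,h^{(i-1)}(\rho^0,r',\Delta^+,\tilde b)+\sum_{j=1}^B\beta_j[p\,h^{(i-1)}(\rho^j,1,1,j)+(1-p)\,h^{(i-1)}(\rho^j,0,1,j)]$, $V^{(i)}(z)=\min_{a\in\{0,1\}}Q^{(i)}(z,a)$, and $h^{(i)}(z)=V^{(i)}(z)-V^{(i)}(z_{\mathrm{ref}})$. The function $V$ is the pointwise limit $V(z)=\lim_{i\to\infty}V^{(i)}(z)$ (which the setting takes to exist). *)

theory Defs
  imports "HOL-Analysis.Analysis"
begin

text \<open>The probability vector beta in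
  [0,1]^(B+1) (indices 0..B) is encoded as a function nat => real that vanishes
  above index B. r is encoded as a natural number in {0,1}.\<close>

type_synonym bstate = "(nat \<Rightarrow> real) \<times> nat \<times> nat \<times> nat"

definition inZ :: "nat \<Rightarrow> nat \<Rightarrow> bstate \<Rightarrow> bool" where
  "inZ B Dmax z = (case z of (\<beta>, r, D, b) \<Rightarrow>
     (\<forall>j\<le>B. 0 \<le> \<beta> j \<and> \<beta> j \<le> 1) \<and> (\<forall>j>B. \<beta> j = 0) \<and> (\<Sum>j\<le>B. \<beta> j) = 1 \<and>
     r \<in> {0,1} \<and> 1 \<le> D \<and> D \<le> Dmax \<and> 1 \<le> b \<and> b \<le> B)"

definition Lam :: "nat \<Rightarrow> real \<Rightarrow> nat \<Rightarrow> nat \<Rightarrow> real" where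
  "Lam B lam j k =
     (if j = k \<and> k < B then 1 - lam
      else if j = k + 1 \<and> k < B then lam
      else if j = B \<and> k = B then 1 else 0)"

definition LamMul :: "nat \<Rightarrow> real \<Rightarrow> (nat \<Rightarrow> real) \<Rightarrow> (nat \<Rightarrow> real)" where
  "LamMul B lam \<beta> = (\<lambda>j. if j \<le> B then (\<Sum>k\<le>B. Lam B lam j k * \<beta> k) else 0)"

definition rho :: "real \<Rightarrow> nat \<Rightarrow> (nat \<Rightarrow> real)" where
  "rho lam j = (if j = 0 then (\<lambda>i. if i = 0 then 1 - lam else if i = 1 then lam else 0)
                else (\<lambda>i. if i = j - 1 then 1 - lam else if i = j then lam else 0))"

definition dplus :: "nat \<Rightarrow> nat \<Rightarrow> nat" where
  "dplus Dmax D = min (D + 1) Dmax"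

definition qr :: "real \<Rightarrow> nat \<Rightarrow> real" where
  "qr p r' = real r' * p + (1 - real r') * (1 - p)"

fun rviV :: "nat \<Rightarrow> real \<Rightarrow> real \<Rightarrow> nat \<Rightarrow> bstate \<Rightarrow> nat \<Rightarrow> bstate \<Rightarrow> real" where
  "rviV B lam p Dmax zref 0 z = 0"
| "rviV B lam p Dmax zref (Suc i) z =
     (case z of (\<beta>, r, D, b) \<Rightarrow>
       (let h = (\<lambda>z'. rviV B lam p Dmax zref i z' - rviV B lam p Dmax zref i zref);
            Dp = dplus Dmax D;
            Q0 = real r * real Dp
                 + (\<Sum>r'\<in>{0,1}. qr p r' * h (LamMul B lam \<beta>, r', Dp, b));
            Q1 = real r * (\<beta> 0 * real Dp + (1 - \<beta> 0))
                 + \<beta> 0 * (\<Sum>r'\<in>{0,1}. qr p r' * h (rho lam 0, r', Dp, b))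
                 + (\<Sum>j=1..B. \<beta> j * (p * h (rho lam j, 1, 1, j)
                                       + (1 - p) * h (rho lam j, 0, 1, j)))
        in min Q0 Q1))"

definition Vlim :: "nat \<Rightarrow> real \<Rightarrow> real \<Rightarrow> nat \<Rightarrow> bstate \<Rightarrow> bstate \<Rightarrow> real" where
  "Vlim B lam p Dmax zref z = lim (\<lambda>i. rviV B lam p Dmax zref i z)"

end

theory Submission
  imports Defs
begin

lemma rviV_battery_knowledge_irrelevant:
  "rviV B lam p Dmax zref i (\<beta>, r, D, b) = rviV B lam p Dmax zref i (\<beta>, r, D, b')"
proof (induction i arbitrary: \<beta> r D b b')
  case 0
  then show ?case by simp
next
  case (Suc i)
  show ?case
    by (simp only: rviV.simps prod.case Let_def Suc.IH[where b = b and b' = b'])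
qed

theorem theorem3:
  fixes B Dmax :: nat and lam p :: real and zref :: bstate
    and \<beta> :: "nat \<Rightarrow> real" and r D b b' :: nat
  assumes "B \<ge> 1" and "0 \<le> lam" and "lam \<le> 1" and "0 \<le> p" and "p \<le> 1"
    and "Dmax \<ge> 2"
    and "inZ B Dmax zref"
    and "\<forall>z. inZ B Dmax z \<longrightarrow> convergent (\<lambda>i. rviV B lam p Dmax zref i z)"
    and "inZ B Dmax (\<beta>, r, D, b)" and "inZ B Dmax (\<beta>, r, D, b')"
  shows "Vlim B lam p Dmax zref (\<beta>, r, D, b) = Vlim B lam p Dmax zref (\<beta>, r, D, b')"
  \<comment> \<open>The iterates already agree.\<close>
  unfolding Vlim_def rviV_battery_knowledge_irrelevant[where b = b and b' = b'] ..

end
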